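(* Let $q\in\mathbb{C}$ with $0<|q|<1$ and $n\in\mathbb{N}$. Then \[ \frac{1}{(q)_\infty}\sum_{k=0}^\infty\frac{q^{k^2}}{(q)_k (q)_{n-k}} =\frac{1}{(q)_n} \sum_{k=0}^{\infty}\frac{q^{k^2}}{(q)_k (q)_{n+k}}, \qquad \frac{1}{(q)_\infty}\sum_{k=0}^\infty\frac{q^{k^2+k}}{(q)_k (q)_{n-k}} =\frac{1}{(q)_n}\sum_{k=0}^{\infty}\frac{q^{k^2+k}}{(q)_k (q)_{n+k+1}}. \]
   Context: $(q)_n=(1-q)(1-q^2)\cdots(1-q^n)$ for $n\ge0$ (with $(q)_0=1$), $1/(q)_n=0$ for $n<0$, and $(q)_\infty=\prod_{i\ge1}(1-q^i)$. *)

theory Defs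
  imports "HOL-Analysis.Analysis"
begin

definition qpoch :: "complex \<Rightarrow> nat \<Rightarrow> complex" where
  "qpoch q n = (\<Prod>i=1..n. 1 - q ^ i)"

definition inv_qpoch :: "complex \<Rightarrow> int \<Rightarrow> complex" where
  "inv_qpoch q n = (if n < 0 then 0 else 1 / qpoch q (nat n))"

definition qpoch_inf :: "complex \<Rightarrow> complex" where
  "qpoch_inf q = (\<Prod>i. 1 - q ^ (i + 1))"

end

theory Submission
  imports Defs
begin

text \<open>
  Write [L,k] for the Gaussian binomial coefficient. For finite L, expand
  (q)_(n+a+L) / (q)_(n+a+k) = (q^(n+a+k+1); q)_(L-k) in
  (q)_(n+a+L) * sum_(k<=L) q^(k^2+ak) [L,k] / (q)_(n+a+k)
  by Rothe's q-binomial theorem and collect the double sum along the antidiagonals k + j = m.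
  Since [L,k] [L-k,j] = [L,m] [m,j], the inner sum is again a Rothe sum, namely
  (q^(n+1-m); q)_m, which equals (q)_n / (q)_(n-m) for m <= n and vanishes for m > n.
  This gives the finite identity
  (q)_(n+a+L) * sum_(k<=L) q^(k^2+ak) [L,k] / (q)_(n+a+k) = sum_(m<=n) [L,m] q^(m^2+am) (q)_n / (q)_(n-m).
  As L tends to infinity, [L,k] tends to 1 / (q)_k and (q)_L to (q)_inf, which is nonzero;
  the factor q^(k^2) bounds the k-th term on the left by C |q|^k uniformly in L, so Tannery's
  theorem passes the limit through the series. The two claimed identities are the cases a = 0
  and a = 1.
\<close>

lemma qpoch_0 [simp]: "qpoch q 0 = 1"
  by (simp add: qpoch_def)

lemma qpoch_Suc: "qpoch q (Suc n) = qpoch q n * (1 - q ^ Suc n)"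
  by (simp add: qpoch_def prod.nat_ivl_Suc')

lemma qpoch_add: "qpoch q (m + d) = qpoch q m * (\<Prod>i<d. 1 - q ^ (m + 1 + i))"
  by (induction d) (simp_all add: qpoch_Suc algebra_simps)

definition qbinomial :: "complex \<Rightarrow> nat \<Rightarrow> nat \<Rightarrow> complex" where
  "qbinomial q m j = (if j \<le> m then qpoch q m / (qpoch q j * qpoch q (m - j)) else 0)"

lemma qbinomial_eq_0 [simp]: "m < j \<Longrightarrow> qbinomial q m j = 0"
  by (simp add: qbinomial_def)

lemma qbinomial_0 [simp]: "qpoch q m \<noteq> 0 \<Longrightarrow> qbinomial q m 0 = 1"
  by (simp add: qbinomial_def)

lemma qbinomial_Suc_Suc:
  assumes nz: "\<And>j. qpoch q j \<noteq> 0"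
  shows "qbinomial q (Suc m) (Suc j) = qbinomial q m j + q ^ Suc j * qbinomial q m (Suc j)"
proof (cases "Suc j \<le> m")
  case True
  then obtain d where m: "m = Suc j + d" using le_Suc_ex by blast
  have "Suc m - Suc j = Suc d" "m - j = Suc d" "m - Suc j = d" using m by auto
  then have binomials: "qbinomial q (Suc m) (Suc j)
        = qpoch q m * (1 - q ^ Suc m) / (qpoch q j * (1 - q ^ Suc j) * (qpoch q d * (1 - q ^ Suc d)))"
    "qbinomial q m j = qpoch q m / (qpoch q j * (qpoch q d * (1 - q ^ Suc d)))"
    "qbinomial q m (Suc j) = qpoch q m / (qpoch q j * (1 - q ^ Suc j) * qpoch q d)"
    using True by (simp_all add: qbinomial_def qpoch_Suc)
  have split: "1 - q ^ Suc m = (1 - q ^ Suc j) + q ^ Suc j * (1 - q ^ Suc d)"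
    by (simp add: m algebra_simps flip: power_add)
  have fraction: "P * ((1 - u) + u * (1 - v)) / (X * (1 - u) * (D * (1 - v)))
      = P / (X * (D * (1 - v))) + u * (P / (X * (1 - u) * D))"
    if "X \<noteq> 0" "D \<noteq> 0" "1 - u \<noteq> 0" "1 - v \<noteq> 0" for P X D u v :: complex
    using that by (simp add: divide_simps) (simp add: algebra_simps)
  have "1 - q ^ Suc j \<noteq> 0" "1 - q ^ Suc d \<noteq> 0"
    using nz[of "Suc j"] nz[of "Suc d"] by (auto simp: qpoch_Suc)
  then show ?thesis
    unfolding binomials split by (rule fraction[OF nz nz])
next
  case False
  then show ?thesis using nz by (cases "j = m") (simp_all add: qbinomial_def)
qed

theorem rothe_qbinomial:
  assumes nz: "\<And>j. qpoch q j \<noteq> 0"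
  shows "(\<Prod>i<m. 1 - z * q ^ i) = (\<Sum>j\<le>m. qbinomial q m j * (-1) ^ j * q ^ (j choose 2) * z ^ j)"
proof (induction m arbitrary: z)
  case 0
  then show ?case using nz by (simp add: numeral_2_eq_2)
next
  case (Suc m)
  define t where "t j = qbinomial q m j * (-1) ^ j * q ^ (j choose 2) * (z * q) ^ j" for j
  define g where "g j = qbinomial q (Suc m) j * (-1) ^ j * q ^ (j choose 2) * z ^ j" for j
  have "(\<Prod>i<Suc m. 1 - z * q ^ i) = (1 - z) * (\<Prod>i<m. 1 - (z * q) * q ^ i)"
    by (subst prod.lessThan_Suc_shift) (simp add: mult.assoc)
  also have "\<dots> = (1 - z) * (\<Sum>j\<le>m. t j)"
    unfolding Suc t_def ..
  also have "\<dots> = t 0 + (\<Sum>j\<le>m. t (Suc j) - z * t j)"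
  proof -
    have "(\<Sum>j\<le>m. t j) = (\<Sum>j\<le>Suc m. t j)"
      by (simp add: t_def)
    also have "\<dots> = t 0 + (\<Sum>j\<le>m. t (Suc j))"
      by (rule sum.atMost_Suc_shift)
    finally have "(\<Sum>j\<le>m. t j) = t 0 + (\<Sum>j\<le>m. t (Suc j))" .
    then show ?thesis by (simp add: left_diff_distrib sum_subtractf flip: sum_distrib_left)
  qed
  also have "\<dots> = g 0 + (\<Sum>j\<le>m. g (Suc j))"
  proof -
    have "g (Suc j) = t (Suc j) - z * t j" for j
      using nz by (simp add: g_def t_def qbinomial_Suc_Suc numeral_2_eq_2 power_add
          power_mult_distrib algebra_simps)
    moreover have "g 0 = t 0"
      using nz by (simp add: g_def t_def)
    ultimately show ?thesis by simp
  qed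
  also have "\<dots> = (\<Sum>j\<le>Suc m. g j)"
    by (rule sum.atMost_Suc_shift[symmetric])
  finally show ?case
    by (simp only: g_def)
qed

lemma qpoch_add_div_qpoch:
  assumes nz: "\<And>j. qpoch q j \<noteq> 0"
  shows "qpoch q (c + d) / qpoch q c
       = (\<Sum>j\<le>d. qbinomial q d j * (-1) ^ j * q ^ (j choose 2) * (q ^ (c + 1)) ^ j)"
proof -
  have "qpoch q (c + d) = qpoch q c * (\<Prod>i<d. 1 - q ^ (c + 1) * q ^ i)"
    using qpoch_add[of q c d] by (simp add: power_add mult.assoc)
  then have "qpoch q (c + d) / qpoch q c = (\<Prod>i<d. 1 - q ^ (c + 1) * q ^ i)"
    using nz[of c] by simp
  then show ?thesis
    by (simp only: rothe_qbinomial[OF nz])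
qed

lemma qbinomial_mult:
  assumes nz: "\<And>j. qpoch q j \<noteq> 0" and "k + j \<le> L"
  shows "qbinomial q L k * qbinomial q (L - k) j = qbinomial q L (k + j) * qbinomial q (k + j) j"
proof -
  have "L - k - j = L - (k + j)" "k + j - j = k" by auto
  then show ?thesis
    using assms(2) nz[of L] nz[of k] nz[of j] nz[of "L - k"] nz[of "L - (k + j)"] nz[of "k + j"]
    by (simp add: qbinomial_def field_simps)
qed

text \<open>The quotient q^(n+1) / q^m stands for q^(n+1-m), whose exponent may be negative.\<close>

lemma qbinomial_alternating_sum:
  fixes q :: complex
  assumes "q \<noteq> 0" and nz: "\<And>j. qpoch q j \<noteq> 0"
  shows "(\<Sum>j\<le>m. qbinomial q m j * (-1) ^ j * q ^ (j choose 2) * (q ^ (n + 1) / q ^ m) ^ j)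
       = (if m \<le> n then qpoch q n / qpoch q (n - m) else 0)"
proof -
  have "(\<Prod>i<m. 1 - (q ^ (n + 1) / q ^ m) * q ^ i) = (if m \<le> n then qpoch q n / qpoch q (n - m) else 0)"
    (is "?P = _")
  proof (cases "m \<le> n")
    case True
    have "q ^ (n - m + 1 + i) * q ^ m = q ^ (n + 1) * q ^ i" for i
      using True by (simp flip: power_add)
    then have "?P = (\<Prod>i<m. 1 - q ^ (n - m + 1 + i))"
      using assms by (intro prod.cong) (simp_all add: field_simps)
    moreover have "qpoch q n = qpoch q (n - m) * (\<Prod>i<m. 1 - q ^ (n - m + 1 + i))"
      using qpoch_add[of q "n - m" m] True by simp
    ultimately show ?thesis using True nz[of "n - m"] by (simp add: field_simps)
  next
    case False
    then have "n + 1 + (m - n - 1) = m" by simp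
    then have "q ^ (n + 1) * q ^ (m - n - 1) = q ^ m"
      by (metis power_add)
    then have "1 - (q ^ (n + 1) / q ^ m) * q ^ (m - n - 1) = 0"
      using assms by (simp add: field_simps)
    then have "?P = 0"
      using False by (intro prod_zero) (auto intro!: bexI[of _ "m - n - 1"])
    then show ?thesis using False by simp
  qed
  then show ?thesis unfolding rothe_qbinomial[OF nz] .
qed

lemma sum_antidiagonal_reindex:
  fixes f :: "nat \<Rightarrow> nat \<Rightarrow> 'a::comm_monoid_add"
  shows "(\<Sum>k\<le>L. \<Sum>j\<le>L - k. f k j) = (\<Sum>m\<le>L. \<Sum>j\<le>m. f (m - j) j)"
proof -
  have "(\<Sum>k\<le>L. \<Sum>j\<le>L - k. f k j) = (\<Sum>(k, j)\<in>Sigma {..L} (\<lambda>k. {..L - k}). f k j)"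
    by (simp add: sum.Sigma)
  also have "\<dots> = (\<Sum>(m, j)\<in>Sigma {..L} (\<lambda>m. {..m}). f (m - j) j)"
    by (rule sum.reindex_bij_witness[of _ "\<lambda>(m, j). (m - j, j)" "\<lambda>(k, j). (k + j, j)"]) auto
  also have "\<dots> = (\<Sum>m\<le>L. \<Sum>j\<le>m. f (m - j) j)"
    by (simp add: sum.Sigma)
  finally show ?thesis .
qed

lemma qbinomial_mult_power_regroup:
  fixes q :: complex
  assumes "q \<noteq> 0" and nz: "\<And>j. qpoch q j \<noteq> 0" and "k + j \<le> L"
  shows "q ^ (k\<^sup>2 + a * k) * qbinomial q L k * qbinomial q (L - k) j * (q ^ (n + a + k + 1)) ^ j
       = qbinomial q L (k + j) * qbinomial q (k + j) j * q ^ ((k + j)\<^sup>2 + a * (k + j))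
         * (q ^ (n + 1) / q ^ (k + j)) ^ j"
proof -
  have "q ^ (k\<^sup>2 + a * k) * (q ^ (n + a + k + 1)) ^ j * (q ^ (k + j)) ^ j
      = q ^ (k\<^sup>2 + a * k + (n + a + k + 1) * j + (k + j) * j)"
    by (simp only: power_add power_mult)
  also have "k\<^sup>2 + a * k + (n + a + k + 1) * j + (k + j) * j = (k + j)\<^sup>2 + a * (k + j) + (n + 1) * j"
    by (simp add: power2_eq_square algebra_simps)
  also have "q ^ \<dots> = q ^ ((k + j)\<^sup>2 + a * (k + j)) * (q ^ (n + 1)) ^ j"
    by (simp only: power_add power_mult)
  finally have "q ^ (k\<^sup>2 + a * k) * (q ^ (n + a + k + 1)) ^ j * (q ^ (k + j)) ^ j
      = q ^ ((k + j)\<^sup>2 + a * (k + j)) * (q ^ (n + 1)) ^ j" .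
  then have powers: "q ^ (k\<^sup>2 + a * k) * (q ^ (n + a + k + 1)) ^ j
      = q ^ ((k + j)\<^sup>2 + a * (k + j)) * (q ^ (n + 1) / q ^ (k + j)) ^ j"
    using assms(1) by (simp add: power_divide field_simps)
  have "q ^ (k\<^sup>2 + a * k) * qbinomial q L k * qbinomial q (L - k) j * (q ^ (n + a + k + 1)) ^ j
      = (qbinomial q L k * qbinomial q (L - k) j) * (q ^ (k\<^sup>2 + a * k) * (q ^ (n + a + k + 1)) ^ j)"
    by (simp only: ac_simps)
  also have "\<dots> = (qbinomial q L (k + j) * qbinomial q (k + j) j)
      * (q ^ ((k + j)\<^sup>2 + a * (k + j)) * (q ^ (n + 1) / q ^ (k + j)) ^ j)"
    by (simp only: qbinomial_mult[OF nz assms(3)] powers)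
  finally show ?thesis
    by (simp only: ac_simps)
qed

lemma qpoch_mult_sum_qbinomial:
  fixes q :: complex
  assumes q0: "q \<noteq> 0" and nz: "\<And>j. qpoch q j \<noteq> 0"
  shows "qpoch q (n + a + L) * (\<Sum>k\<le>L. q ^ (k\<^sup>2 + a * k) * qbinomial q L k / qpoch q (n + a + k))
       = (\<Sum>m\<le>n. qbinomial q L m * q ^ (m\<^sup>2 + a * m) * qpoch q n / qpoch q (n - m))"
proof -
  define f where "f k j = q ^ (k\<^sup>2 + a * k) * qbinomial q L k * qbinomial q (L - k) j
    * (q ^ (n + a + k + 1)) ^ j * ((-1) ^ j * q ^ (j choose 2))" for k j
  have expand: "qpoch q (n + a + L) / qpoch q (n + a + k)
      = (\<Sum>j\<le>L - k. qbinomial q (L - k) j * (-1) ^ j * q ^ (j choose 2) * (q ^ (n + a + k + 1)) ^ j)"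
    if "k \<le> L" for k
    using qpoch_add_div_qpoch[OF nz, of "n + a + k" "L - k"] that by (simp add: add.assoc)
  have regroup: "f (m - j) j = qbinomial q L m * q ^ (m\<^sup>2 + a * m) *
      (qbinomial q m j * (-1) ^ j * q ^ (j choose 2) * (q ^ (n + 1) / q ^ m) ^ j)"
    if "j \<le> m" "m \<le> L" for m j
    using qbinomial_mult_power_regroup[OF q0 nz, of "m - j" j L a n] that
    by (simp add: f_def mult_ac)
  have "qpoch q (n + a + L) * (\<Sum>k\<le>L. q ^ (k\<^sup>2 + a * k) * qbinomial q L k / qpoch q (n + a + k))
      = (\<Sum>k\<le>L. q ^ (k\<^sup>2 + a * k) * qbinomial q L k * (qpoch q (n + a + L) / qpoch q (n + a + k)))"
    by (simp add: sum_distrib_left mult_ac)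
  also have "\<dots> = (\<Sum>k\<le>L. \<Sum>j\<le>L - k. f k j)"
    by (intro sum.cong refl) (simp add: expand f_def sum_distrib_left mult_ac)
  also have "\<dots> = (\<Sum>m\<le>L. \<Sum>j\<le>m. f (m - j) j)"
    by (rule sum_antidiagonal_reindex)
  also have "\<dots> = (\<Sum>m\<le>L. qbinomial q L m * q ^ (m\<^sup>2 + a * m) *
      (\<Sum>j\<le>m. qbinomial q m j * (-1) ^ j * q ^ (j choose 2) * (q ^ (n + 1) / q ^ m) ^ j))"
    by (intro sum.cong refl) (simp add: regroup sum_distrib_left)
  also have "\<dots> = (\<Sum>m\<le>L. qbinomial q L m * q ^ (m\<^sup>2 + a * m) *
      (if m \<le> n then qpoch q n / qpoch q (n - m) else 0))"
    by (simp only: qbinomial_alternating_sum[OF q0 nz])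
  also have "\<dots> = (\<Sum>m\<le>L + n. qbinomial q L m * q ^ (m\<^sup>2 + a * m) *
      (if m \<le> n then qpoch q n / qpoch q (n - m) else 0))"
    by (rule sum.mono_neutral_left) auto
  also have "\<dots> = (\<Sum>m\<le>n. qbinomial q L m * q ^ (m\<^sup>2 + a * m) * qpoch q n / qpoch q (n - m))"
    by (rule sum.mono_neutral_cong_right) auto
  finally show ?thesis .
qed

context
  fixes q :: complex
  assumes q_pos: "0 < norm q" and q_lt_1: "norm q < 1"
begin

lemma q_power_neq_1: "0 < i \<Longrightarrow> q ^ i \<noteq> 1"
  using q_lt_1 power_less_one_iff[of "norm q" i] by (auto simp flip: norm_power)

lemma qpoch_nonzero: "qpoch q j \<noteq> 0"
  using q_power_neq_1 by (auto simp: qpoch_def)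

lemma convergent_prod_qpoch: "convergent_prod (\<lambda>i. 1 - q ^ (i + 1))"
proof -
  have "convergent_prod (\<lambda>i. 1 + - (q ^ (i + 1)))"
  proof (rule summable_imp_convergent_prod_complex)
    show "summable (\<lambda>i. norm (- (q ^ (i + 1))))"
      using q_lt_1 by (simp add: norm_mult norm_power)
    show "- (q ^ (i + 1)) \<noteq> -1" for i
      using q_power_neq_1[of "i + 1"] by simp
  qed
  then show ?thesis by simp
qed

lemma qpoch_inf_nonzero: "qpoch_inf q \<noteq> 0"
proof -
  have "1 - q ^ (i + 1) \<noteq> 0" for i
    using q_power_neq_1[of "i + 1"] by simp
  then show ?thesis
    unfolding qpoch_inf_def by (intro prodinf_nonzero convergent_prod_qpoch)
qed

lemma qpoch_tendsto: "qpoch q \<longlonglongrightarrow> qpoch_inf q"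
proof (rule LIMSEQ_imp_Suc)
  have "qpoch q (Suc L) = (\<Prod>i\<le>L. 1 - q ^ (i + 1))" for L
    unfolding qpoch_def
    by (simp add: atMost_atLeast0 prod.shift_bounds_cl_Suc_ivl del: prod.cl_ivl_Suc)
  then show "(\<lambda>L. qpoch q (Suc L)) \<longlonglongrightarrow> qpoch_inf q"
    unfolding qpoch_inf_def by (simp only: convergent_prod_LIMSEQ[OF convergent_prod_qpoch])
qed

lemma qpoch_tendsto_shift: "(\<lambda>L. qpoch q (c + L)) \<longlonglongrightarrow> qpoch_inf q"
  using LIMSEQ_ignore_initial_segment[OF qpoch_tendsto, of c] by (simp add: add.commute)

lemma qbinomial_tendsto: "(\<lambda>L. qbinomial q L m) \<longlonglongrightarrow> 1 / qpoch q m"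
proof (rule LIMSEQ_offset)
  have "(\<lambda>L. qpoch q (L + m) / (qpoch q m * qpoch q L)) \<longlonglongrightarrow> qpoch_inf q / (qpoch q m * qpoch_inf q)"
    by (intro tendsto_divide tendsto_mult tendsto_const qpoch_tendsto LIMSEQ_ignore_initial_segment)
      (simp add: qpoch_nonzero qpoch_inf_nonzero)
  then show "(\<lambda>L. qbinomial q (L + m) m) \<longlonglongrightarrow> 1 / qpoch q m"
    using qpoch_inf_nonzero by (simp add: qbinomial_def)
qed

lemma Bseq_inverse_qpoch: "Bseq (\<lambda>j. inverse (qpoch q j))"
  by (rule Bfun_inverse[OF qpoch_tendsto qpoch_inf_nonzero])

lemma qbinomial_bounded: obtains C where "\<And>L k. norm (qbinomial q L k) \<le> C"
proof -
  have "Bseq (qpoch q)"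
    by (rule convergent_imp_Bseq, rule convergentI, rule qpoch_tendsto)
  then obtain K where "K > 0" and K: "\<forall>j. norm (qpoch q j) \<le> K"
    by (rule BseqE)
  obtain B where "B > 0" and B: "\<forall>j. norm (inverse (qpoch q j)) \<le> B"
    using Bseq_inverse_qpoch by (rule BseqE)
  have "norm (qbinomial q L k) \<le> K * B * B" for L k
  proof (cases "k \<le> L")
    case True
    then have "norm (qbinomial q L k)
        = norm (qpoch q L) * norm (inverse (qpoch q k)) * norm (inverse (qpoch q (L - k)))"
      by (simp add: qbinomial_def norm_divide norm_mult norm_inverse divide_inverse)
    also have "\<dots> \<le> K * B * B"
      using K B \<open>K > 0\<close> \<open>B > 0\<close> by (intro mult_mono) auto
    finally show ?thesis .
  next
    case False
    then show ?thesis using \<open>K > 0\<close> \<open>B > 0\<close> by (simp add: qbinomial_def)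
  qed
  then show ?thesis by (rule that)
qed

lemma tendsto_sum_qbinomial:
  "(\<lambda>L. \<Sum>k\<le>L. q ^ (k\<^sup>2 + a * k) * qbinomial q L k / qpoch q (c + k))
   \<longlonglongrightarrow> (\<Sum>k. q ^ (k\<^sup>2 + a * k) / (qpoch q k * qpoch q (c + k)))"
proof -
  define A where "A k L = q ^ (k\<^sup>2 + a * k) * qbinomial q L k / qpoch q (c + k)" for k L
  obtain C where C: "\<And>L k. norm (qbinomial q L k) \<le> C"
    by (metis qbinomial_bounded)
  obtain B where "B > 0" and B: "\<forall>j. norm (inverse (qpoch q j)) \<le> B"
    using Bseq_inverse_qpoch by (rule BseqE)
  have "(\<lambda>L. A k L) \<longlonglongrightarrow> q ^ (k\<^sup>2 + a * k) / (qpoch q k * qpoch q (c + k))" for k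
    using qbinomial_tendsto[of k] unfolding A_def
    by (auto intro!: tendsto_eq_intros simp: qpoch_nonzero)
  moreover have "norm (A k L) \<le> norm q ^ k * (C * B)" for k L
  proof -
    have "k \<le> k\<^sup>2 + a * k"
      using le_square[of k] by (simp add: power2_eq_square trans_le_add1)
    then have "norm q ^ (k\<^sup>2 + a * k) \<le> norm q ^ k"
      using q_lt_1 by (intro power_decreasing) auto
    moreover have "norm (qbinomial q L k / qpoch q (c + k)) \<le> C * B"
      unfolding divide_inverse norm_mult
      using C B order_trans[OF norm_ge_zero C] by (intro mult_mono) auto
    moreover have "norm (A k L) = norm q ^ (k\<^sup>2 + a * k) * norm (qbinomial q L k / qpoch q (c + k))"
      by (simp add: A_def norm_mult norm_power flip: times_divide_eq_right)
    ultimately show ?thesis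
      by (simp add: mult_mono')
  qed
  moreover have "summable (\<lambda>k. norm q ^ k * (C * B))"
    using q_lt_1 by (simp add: summable_mult2)
  ultimately have "(\<lambda>L. \<Sum>k. A k L) \<longlonglongrightarrow> (\<Sum>k. q ^ (k\<^sup>2 + a * k) / (qpoch q k * qpoch q (c + k)))"
    using tannerys_theorem[of A "\<lambda>k. q ^ (k\<^sup>2 + a * k) / (qpoch q k * qpoch q (c + k))"
        sequentially "\<lambda>k. norm q ^ k * (C * B)"]
    by (auto intro: always_eventually)
  moreover have "(\<Sum>k. A k L) = (\<Sum>k\<le>L. A k L)" for L
    by (rule suminf_finite) (auto simp: A_def)
  ultimately show ?thesis
    by (simp add: A_def)
qed

lemma qpoch_inf_mult_suminf:
  "qpoch_inf q * (\<Sum>k. q ^ (k\<^sup>2 + a * k) / (qpoch q k * qpoch q (n + a + k)))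
   = (\<Sum>m\<le>n. q ^ (m\<^sup>2 + a * m) * qpoch q n / (qpoch q m * qpoch q (n - m)))"
proof -
  have "(\<lambda>L. qpoch q (n + a + L) * (\<Sum>k\<le>L. q ^ (k\<^sup>2 + a * k) * qbinomial q L k / qpoch q (n + a + k)))
      \<longlonglongrightarrow> qpoch_inf q * (\<Sum>k. q ^ (k\<^sup>2 + a * k) / (qpoch q k * qpoch q (n + a + k)))"
    by (intro tendsto_mult qpoch_tendsto_shift tendsto_sum_qbinomial)
  moreover have "(\<lambda>L. \<Sum>m\<le>n. qbinomial q L m * q ^ (m\<^sup>2 + a * m) * qpoch q n / qpoch q (n - m))
      \<longlonglongrightarrow> (\<Sum>m\<le>n. 1 / qpoch q m * q ^ (m\<^sup>2 + a * m) * qpoch q n / qpoch q (n - m))"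
    by (intro tendsto_intros qbinomial_tendsto) (simp add: qpoch_nonzero)
  ultimately show ?thesis
    using LIMSEQ_unique q_pos by (simp add: qpoch_mult_sum_qbinomial qpoch_nonzero)
qed

lemma q_series_identity:
  "(1 / qpoch_inf q) * (\<Sum>k. q ^ (k\<^sup>2 + a * k) * inv_qpoch q (int k) * inv_qpoch q (int n - int k))
   = (1 / qpoch q n) * (\<Sum>k. q ^ (k\<^sup>2 + a * k) * inv_qpoch q (int k) * inv_qpoch q (int n + int k + int a))"
proof -
  have "(\<Sum>k. q ^ (k\<^sup>2 + a * k) * inv_qpoch q (int k) * inv_qpoch q (int n - int k))
      = (\<Sum>k\<le>n. q ^ (k\<^sup>2 + a * k) / (qpoch q k * qpoch q (n - k)))"
    by (subst suminf_finite[of "{..n}"]) (auto simp: inv_qpoch_def nat_diff_distrib intro!: sum.cong)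
  also have "\<dots> = qpoch_inf q / qpoch q n * (\<Sum>k. q ^ (k\<^sup>2 + a * k) / (qpoch q k * qpoch q (n + a + k)))"
    using qpoch_inf_mult_suminf[of a n] qpoch_nonzero[of n]
    by (simp add: field_simps sum_distrib_left)
  also have "(\<Sum>k. q ^ (k\<^sup>2 + a * k) / (qpoch q k * qpoch q (n + a + k)))
      = (\<Sum>k. q ^ (k\<^sup>2 + a * k) * inv_qpoch q (int k) * inv_qpoch q (int n + int k + int a))"
    by (simp add: inv_qpoch_def nat_add_distrib add_ac)
  finally show ?thesis
    using qpoch_inf_nonzero by simp
qed

end

theorem mainTheorem15:
  fixes q :: complex and n :: nat
  assumes "0 < norm q" and "norm q < 1"
  shows "(1 / qpoch_inf q) * (\<Sum>k. q ^ (k^2) * inv_qpoch q (int k) * inv_qpoch q (int n - int k))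
           = (1 / qpoch q n) * (\<Sum>k. q ^ (k^2) * inv_qpoch q (int k) * inv_qpoch q (int n + int k))
       \<and> (1 / qpoch_inf q) * (\<Sum>k. q ^ (k^2 + k) * inv_qpoch q (int k) * inv_qpoch q (int n - int k))
           = (1 / qpoch q n) * (\<Sum>k. q ^ (k^2 + k) * inv_qpoch q (int k) * inv_qpoch q (int n + int k + 1))"
  using q_series_identity[OF assms, of 0 n] q_series_identity[OF assms, of 1 n] by simp

end
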